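(* Let $G=(V,E)$ be a graph and $[W,F]$ a non-maximal utter clique of $G$. Then the inequality $x(W)+y(F\cap E(V\setminus W))-y(E(W))\le 1$ is dominated by (i.e., is implied as a nonnegative combination of) the inequalities $x(W')+y(F'\cap E(V\setminus W'))-y(E(W'))\le 1$ for all maximal utter cliques $[W',F']$ of $G$, $y(\delta(v))\le x_v$ for all $v\in V$, and $-y_e\le 0$ for all $e\in E$.
   Context: All graphs are simple and connected. For $W\subseteq V$, $E(W)$ is the set of edges with both endpoints in $W$, $\delta(v)$ is the set of edges incident to $v$, and $x(A)=\sum_{a\in A}x_a$. The utter graph $u(G)$ has vertex set $V\cup E$, where two elements are adjacent iff: they are two adjacent vertices of $G$; or a vertex and an edge incident to it; or two edges sharing an endpoint; or a vertex $w$ and an edge $uv$ not containing $w$ with $wu\in E$ or $wv\in E$; or two disjoint edges $uv,xy$ such that some edge of $G$ joins $\{u,v\}$ to $\{x,y\}$. For $W\subseteq V$, $F\subseteq E$, $[W,F]$ is an utter clique if $W\cup F$ is a clique of $u(G)$; it is maximal if no element of $V\setminus W$ or $E\setminus F$ can be added while remaining an utter clique. *)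

theory Defs
  imports Complex_Main
begin

definition simple_graph :: "'a set \<Rightarrow> 'a set set \<Rightarrow> bool" where
  "simple_graph V E \<longleftrightarrow> finite V \<and> (\<forall>e\<in>E. e \<subseteq> V \<and> card e = 2)"

definition adj :: "'a set set \<Rightarrow> 'a \<Rightarrow> 'a \<Rightarrow> bool" where
  "adj E u v \<longleftrightarrow> {u, v} \<in> E"

definition connected_graph :: "'a set \<Rightarrow> 'a set set \<Rightarrow> bool" where
  "connected_graph V E \<longleftrightarrow> V \<noteq> {} \<and> (\<forall>u\<in>V. \<forall>v\<in>V. (adj E)\<^sup>*\<^sup>* u v)"

text \<open>Adjacency in the utter graph u(G), split by element kinds.\<close>
definition utter_vv :: "'a set set \<Rightarrow> 'a \<Rightarrow> 'a \<Rightarrow> bool" where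
  "utter_vv E u w \<longleftrightarrow> {u, w} \<in> E"

definition utter_ve :: "'a set set \<Rightarrow> 'a \<Rightarrow> 'a set \<Rightarrow> bool" where
  "utter_ve E w f \<longleftrightarrow> w \<in> f \<or> (w \<notin> f \<and> (\<exists>u\<in>f. {w, u} \<in> E))"

definition utter_ee :: "'a set set \<Rightarrow> 'a set \<Rightarrow> 'a set \<Rightarrow> bool" where
  "utter_ee E e f \<longleftrightarrow> e \<inter> f \<noteq> {} \<or> (e \<inter> f = {} \<and> (\<exists>u\<in>e. \<exists>v\<in>f. {u, v} \<in> E))"

definition utter_clique :: "'a set \<Rightarrow> 'a set set \<Rightarrow> 'a set \<Rightarrow> 'a set set \<Rightarrow> bool" where
  "utter_clique V E W F \<longleftrightarrow> W \<subseteq> V \<and> F \<subseteq> E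
     \<and> (\<forall>u\<in>W. \<forall>w\<in>W. u \<noteq> w \<longrightarrow> utter_vv E u w)
     \<and> (\<forall>w\<in>W. \<forall>f\<in>F. utter_ve E w f)
     \<and> (\<forall>e\<in>F. \<forall>f\<in>F. e \<noteq> f \<longrightarrow> utter_ee E e f)"

definition maximal_utter_clique :: "'a set \<Rightarrow> 'a set set \<Rightarrow> 'a set \<Rightarrow> 'a set set \<Rightarrow> bool" where
  "maximal_utter_clique V E W F \<longleftrightarrow> utter_clique V E W F
     \<and> (\<forall>v\<in>V - W. \<not> utter_clique V E (insert v W) F)
     \<and> (\<forall>e\<in>E - F. \<not> utter_clique V E W (insert e F))"

definition clique_coef_x :: "'a set \<Rightarrow> 'a \<Rightarrow> real" where
  "clique_coef_x W v = (if v \<in> W then 1 else 0)"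

definition clique_coef_y :: "'a set \<Rightarrow> 'a set \<Rightarrow> 'a set set \<Rightarrow> 'a set \<Rightarrow> real" where
  "clique_coef_y V W F e =
     (if e \<in> F \<and> e \<subseteq> V - W then 1 else 0) - (if e \<subseteq> W then 1 else 0)"

end

theory Submission
  imports Defs "HOL-Library.Product_Order" "HOL-Library.Indicator_Function"
begin

text \<open>Every utter clique [W, F] extends to a maximal one [W', F']. Putting weight 1 on [W', F'],
  the vertex multipliers \<mu> = indicator (W' - W) absorb the excess of x(W') over x(W), and what
  remains on each edge is nonnegative, so it is the multiplier of the inequality -y(e) \<le> 0.\<close>

lemma simple_graph_finite_edges:
  assumes "simple_graph V E"
  shows "finite E"
proof -
  have "E \<subseteq> Pow V" using assms by (auto simp: simple_graph_def)
  then show ?thesis using assms finite_Pow_iff finite_subset by (auto simp: simple_graph_def)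
qed

lemma utter_clique_subset_Pow:
  "{(W, F). utter_clique V E W F} \<subseteq> Pow V \<times> Pow E"
  by (auto simp: utter_clique_def)

lemma finite_maximal_utter_cliques:
  assumes "finite V" "finite E"
  shows "finite {(W, F). maximal_utter_clique V E W F}"
proof (rule finite_subset)
  show "{(W, F). maximal_utter_clique V E W F} \<subseteq> Pow V \<times> Pow E"
    using utter_clique_subset_Pow by (fastforce simp: maximal_utter_clique_def)
qed (use assms in simp)

lemma utter_clique_extends_to_maximal:
  assumes "finite V" "finite E" "utter_clique V E W F"
  obtains W' F' where "maximal_utter_clique V E W' F'" "W \<subseteq> W'" "F \<subseteq> F'"
proof -
  let ?C = "{(W, F). utter_clique V E W F}"
  \<comment> \<open>maximal with respect to the componentwise order on pairs of Product_Order\<close>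
  have "finite ?C"
    using assms(1,2) utter_clique_subset_Pow[of V E] finite_subset by blast
  then obtain W' F' where C: "(W', F') \<in> ?C" and le: "(W, F) \<le> (W', F')"
    and max: "\<And>W'' F''. (W'', F'') \<in> ?C \<Longrightarrow> (W', F') \<le> (W'', F'') \<Longrightarrow> (W', F') = (W'', F'')"
    using finite_has_maximal2[of ?C "(W, F)"] assms(3) by fastforce
  have "maximal_utter_clique V E W' F'"
    unfolding maximal_utter_clique_def
  proof (intro conjI ballI notI)
    show "utter_clique V E W' F'" using C by simp
  next
    fix v assume "v \<in> V - W'" "utter_clique V E (insert v W') F'"
    then show False using max[of "insert v W'" F'] by auto
  next
    fix e assume "e \<in> E - F'" "utter_clique V E W' (insert e F')"
    then show False using max[of W' "insert e F'"] by auto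
  qed
  with le show ?thesis by (intro that) auto
qed

lemma clique_coef_y_le_superclique:
  assumes "W \<subseteq> W'" "F \<subseteq> F'" "card e = 2"
  shows "clique_coef_y V W F e \<le> clique_coef_y V W' F' e + (\<Sum>v\<in>e. indicator (W' - W) v)"
proof -
  obtain a b where e: "e = {a, b}" "a \<noteq> b" using assms(3) by (meson card_2_iff)
  show ?thesis
    using assms(1,2) e(2) unfolding e(1) clique_coef_y_def
    by (auto simp: indicator_def simp del: sum_of_bool_eq)
qed

lemma sum_case_prod_delta:
  assumes "finite S" "(a, b) \<in> S"
  shows "(\<Sum>(x, y)\<in>S. (if (x, y) = (a, b) then 1 else 0) * g x y) = (g a b :: 'c::semiring_1)"
proof -
  have "(\<Sum>(x, y)\<in>S. (if (x, y) = (a, b) then 1 else 0) * g x y)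
      = (\<Sum>p\<in>S. if p = (a, b) then g (fst p) (snd p) else 0)"
    by (rule sum.cong) (auto split: if_splits)
  also have "\<dots> = g a b" using assms by (simp add: sum.delta')
  finally show ?thesis .
qed

theorem mainTheorem2:
  fixes V :: "'a set" and E :: "'a set set" and W :: "'a set" and F :: "'a set set"
  assumes "simple_graph V E" and "connected_graph V E"
    and "utter_clique V E W F" and "\<not> maximal_utter_clique V E W F"
  shows "\<exists>(lam::'a set \<times> 'a set set \<Rightarrow> real) (\<mu>::'a \<Rightarrow> real) (\<nu>::'a set \<Rightarrow> real).
           (\<forall>C\<in>{(W', F'). maximal_utter_clique V E W' F'}. lam C \<ge> 0)
         \<and> (\<forall>v\<in>V. \<mu> v \<ge> 0) \<and> (\<forall>e\<in>E. \<nu> e \<ge> 0)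
         \<and> (\<forall>v\<in>V. clique_coef_x W v =
               (\<Sum>(W', F')\<in>{(W', F'). maximal_utter_clique V E W' F'}. lam (W', F') * clique_coef_x W' v)
               - \<mu> v)
         \<and> (\<forall>e\<in>E. clique_coef_y V W F e =
               (\<Sum>(W', F')\<in>{(W', F'). maximal_utter_clique V E W' F'}. lam (W', F') * clique_coef_y V W' F' e)
               + (\<Sum>v\<in>e. \<mu> v) - \<nu> e)
         \<and> (\<Sum>(W', F')\<in>{(W', F'). maximal_utter_clique V E W' F'}. lam (W', F')) \<le> 1"
proof -
  have fin: "finite V" "finite E"
    using assms(1) simple_graph_finite_edges by (auto simp: simple_graph_def)
  obtain W1 F1 where maximal: "maximal_utter_clique V E W1 F1" and sub: "W \<subseteq> W1" "F \<subseteq> F1"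
    using utter_clique_extends_to_maximal[OF fin assms(3)] .
  define S where "S = {(W', F'). maximal_utter_clique V E W' F'}"
  define lam :: "'a set \<times> 'a set set \<Rightarrow> real" where "lam C = (if C = (W1, F1) then 1 else 0)" for C
  define \<mu> :: "'a \<Rightarrow> real" where "\<mu> = indicator (W1 - W)"
  define \<nu> :: "'a set \<Rightarrow> real"
    where "\<nu> e = clique_coef_y V W1 F1 e + (\<Sum>v\<in>e. \<mu> v) - clique_coef_y V W F e" for e
  have "finite S" "(W1, F1) \<in> S"
    using finite_maximal_utter_cliques[OF fin] maximal by (simp_all add: S_def)
  then have weighted: "(\<Sum>(W', F')\<in>S. lam (W', F') * g W' F') = g W1 F1" for g :: "_ \<Rightarrow> _ \<Rightarrow> real"
    unfolding lam_def by (rule sum_case_prod_delta)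
  have "\<nu> e \<ge> 0" if "e \<in> E" for e
    using that assms(1) clique_coef_y_le_superclique[OF sub] by (simp add: simple_graph_def \<nu>_def \<mu>_def)
  then show ?thesis
    unfolding S_def[symmetric]
    using weighted[of "\<lambda>_ _. 1"] weighted sub
    by (intro exI[of _ lam] exI[of _ \<mu>] exI[of _ \<nu>])
       (auto simp: lam_def \<mu>_def \<nu>_def clique_coef_x_def)
qed

end
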